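(* Let $2\leq d_1\leq d_2$ and let $X$ be a positive semidefinite matrix in $\mathcal{M}_{d_1}\otimes\mathcal{M}_{d_2}$, written as $X=\sum_{i,j=1}^{d_1}\ket{i}\bra{j}\otimes X_{ij}$ with blocks $X_{ij}\in\mathcal{M}_{d_2}$. If $\mathrm{SN}(X)=d_1$, then there exist distinct $k_1,k_2\in\{1,\ldots,d_1\}$ such that \[ Y=\sum_{s,t=1}^{2}\ket{s}\bra{t}\otimes X_{k_sk_t}\in\mathcal{M}_2\otimes\mathcal{M}_{d_2} \] is entangled.
   Context: $\mathcal{M}_d$: complex $d\times d$ matrices. A positive semidefinite $W\in\mathcal{M}_{a}\otimes\mathcal{M}_{b}$ is separable if it is a finite sum $\sum_i P_i\otimes Q_i$ with $P_i,Q_i$ positive semidefinite, and entangled otherwise. The Schmidt rank of $\ket{\psi}$ is the rank of $\mathrm{tr}_A\ket{\psi}\bra{\psi}$; for a nonzero positive semidefinite $W$, $\mathrm{SN}(W)$ is the minimum over decompositions $W=\sum_ip_i\ket{\psi_i}\bra{\psi_i}$ ($p_i>0$) of the maximal Schmidt rank of the $\ket{\psi_i}$. *)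

theory Defs
  imports Complex_Main "Jordan_Normal_Form.DL_Rank"
begin

text \<open>A bipartite space C^a (x) C^b is identified with C^(a*b) via the index
  (i,x) maps to i*b + x (first factor most significant), i.e. the Kronecker convention.
  All indices are 0-based.\<close>

definition hermitian :: "nat \<Rightarrow> complex mat \<Rightarrow> bool" where
  "hermitian n A \<longleftrightarrow> A \<in> carrier_mat n n \<and>
     (\<forall>i<n. \<forall>j<n. A $$ (i, j) = cnj (A $$ (j, i)))"

definition psd :: "nat \<Rightarrow> complex mat \<Rightarrow> bool" where
  "psd n A \<longleftrightarrow> hermitian n A \<and>
     (\<forall>v \<in> carrier_vec n. 0 \<le> Re (\<Sum>i<n. \<Sum>j<n. cnj (v $ i) * A $$ (i, j) * v $ j))"

definition kron :: "nat \<Rightarrow> nat \<Rightarrow> complex mat \<Rightarrow> complex mat \<Rightarrow> complex mat" where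
  "kron a b P Q = mat (a * b) (a * b)
     (\<lambda>(r, c). P $$ (r div b, c div b) * Q $$ (r mod b, c mod b))"

definition separable :: "nat \<Rightarrow> nat \<Rightarrow> complex mat \<Rightarrow> bool" where
  "separable a b W \<longleftrightarrow> W \<in> carrier_mat (a * b) (a * b) \<and>
     (\<exists>(n::nat) P Q. (\<forall>i<n. psd a (P i) \<and> psd b (Q i)) \<and>
        (\<forall>r < a * b. \<forall>c < a * b. W $$ (r, c) = (\<Sum>i<n. kron a b (P i) (Q i) $$ (r, c))))"

definition entangled :: "nat \<Rightarrow> nat \<Rightarrow> complex mat \<Rightarrow> bool" where
  "entangled a b W \<longleftrightarrow> psd (a * b) W \<and> \<not> separable a b W"

definition outer :: "nat \<Rightarrow> complex vec \<Rightarrow> complex mat" where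
  "outer n v = mat n n (\<lambda>(i, j). v $ i * cnj (v $ j))"

definition ptrace_A :: "nat \<Rightarrow> nat \<Rightarrow> complex mat \<Rightarrow> complex mat" where
  "ptrace_A a b M = mat b b (\<lambda>(x, y). \<Sum>i<a. M $$ (i * b + x, i * b + y))"

definition schmidt_rank :: "nat \<Rightarrow> nat \<Rightarrow> complex vec \<Rightarrow> nat" where
  "schmidt_rank a b v = vec_space.rank b (ptrace_A a b (outer (a * b) v))"

definition schmidt_number :: "nat \<Rightarrow> nat \<Rightarrow> complex mat \<Rightarrow> nat" where
  "schmidt_number a b W = (LEAST k. \<exists>(n::nat) (p :: nat \<Rightarrow> real) (psi :: nat \<Rightarrow> complex vec).
     (\<forall>i<n. p i > 0 \<and> psi i \<in> carrier_vec (a * b) \<and> schmidt_rank a b (psi i) \<le> k) \<and>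
     (\<forall>r < a * b. \<forall>c < a * b.
        W $$ (r, c) = (\<Sum>i<n. complex_of_real (p i) * outer (a * b) (psi i) $$ (r, c))))"

definition block :: "nat \<Rightarrow> complex mat \<Rightarrow> nat \<Rightarrow> nat \<Rightarrow> complex mat" where
  "block d X i j = mat d d (\<lambda>(x, y). X $$ (i * d + x, j * d + y))"

definition block_mat :: "nat \<Rightarrow> nat \<Rightarrow> (nat \<Rightarrow> nat \<Rightarrow> complex mat) \<Rightarrow> complex mat" where
  "block_mat n d B = mat (n * d) (n * d) (\<lambda>(r, c). B (r div d) (c div d) $$ (r mod d, c mod d))"

end

theory Submission
  imports Defs
begin

text \<open>Take the two leading blocks, k1 = 0 and k2 = 1. If the corresponding 2 x 2 block matrix
  Y were separable, it would be a Gram matrix of product vectors p (x) q. A positive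
  semidefinite X whose principal submatrix is a Gram matrix sum w w* is itself of the form
  sum v v* + sum u u*, where each v extends the corresponding w and each u vanishes on the
  support of the submatrix (each w lies in the range of the submatrix, and v is the image of the
  corresponding preimage under X). Every vector of this decomposition of X has its first two
  blocks parallel, so the partial trace of its projector is a sum of at most d1 - 1 rank-one
  matrices; hence SN(X) \<le> d1 - 1.\<close>

text \<open>Vectors and matrices of size n are encoded as functions on indices; values outside
  {0..<n} are irrelevant.\<close>

definition cinner :: "nat \<Rightarrow> (nat \<Rightarrow> complex) \<Rightarrow> (nat \<Rightarrow> complex) \<Rightarrow> complex" where
  "cinner n u v = (\<Sum>i<n. cnj (u i) * v i)"

definition matvec :: "nat \<Rightarrow> (nat \<Rightarrow> nat \<Rightarrow> complex) \<Rightarrow> (nat \<Rightarrow> complex) \<Rightarrow> nat \<Rightarrow> complex" where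
  "matvec n M v = (\<lambda>i. \<Sum>j<n. M i j * v j)"

abbreviation quad_form :: "nat \<Rightarrow> (nat \<Rightarrow> nat \<Rightarrow> complex) \<Rightarrow> (nat \<Rightarrow> complex) \<Rightarrow> complex" where
  "quad_form n M u \<equiv> cinner n u (matvec n M u)"

definition hermitian_fn :: "nat \<Rightarrow> (nat \<Rightarrow> nat \<Rightarrow> complex) \<Rightarrow> bool" where
  "hermitian_fn n M = (\<forall>i<n. \<forall>j<n. M i j = cnj (M j i))"

definition psd_fn :: "nat \<Rightarrow> (nat \<Rightarrow> nat \<Rightarrow> complex) \<Rightarrow> bool" where
  "psd_fn n M = (hermitian_fn n M \<and> (\<forall>v. 0 \<le> Re (quad_form n M v)))"

definition basis_fn :: "nat \<Rightarrow> nat \<Rightarrow> complex" where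
  "basis_fn k = (\<lambda>i. if i = k then 1 else 0)"

lemma cinner_add_right: "cinner n u (\<lambda>i. a i + b i) = cinner n u a + cinner n u b"
  by (simp add: cinner_def distrib_left sum.distrib)

lemma cinner_diff_right: "cinner n u (\<lambda>i. a i - b i) = cinner n u a - cinner n u b"
  by (simp add: cinner_def right_diff_distrib sum_subtractf)

lemma cinner_scale_right: "cinner n u (\<lambda>i. c * a i) = c * cinner n u a"
  by (simp add: cinner_def sum_distrib_left mult_ac)

lemma cinner_add_left: "cinner n (\<lambda>i. a i + b i) v = cinner n a v + cinner n b v"
  by (simp add: cinner_def distrib_right sum.distrib)

lemma cinner_scale_left: "cinner n (\<lambda>i. c * a i) v = cnj c * cinner n a v"
  by (simp add: cinner_def sum_distrib_left mult_ac)

lemma cinner_commute: "cinner n u v = cnj (cinner n v u)"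
  by (simp add: cinner_def mult_ac)

lemma cinner_cong_right: "(\<And>i. i < n \<Longrightarrow> f i = g i) \<Longrightarrow> cinner n u f = cinner n u g"
  unfolding cinner_def by (rule sum.cong) auto

lemma cinner_basis_left: "k < n \<Longrightarrow> cinner n (basis_fn k) v = v k"
proof -
  assume k: "k < n"
  have "cinner n (basis_fn k) v = (\<Sum>i<n. if i = k then v i else 0)"
    unfolding cinner_def basis_fn_def by (rule sum.cong) auto
  then show ?thesis using k by simp
qed

lemma matvec_add: "matvec n M (\<lambda>i. a i + b i) = (\<lambda>i. matvec n M a i + matvec n M b i)"
  by (simp add: matvec_def distrib_left sum.distrib)

lemma matvec_scale: "matvec n M (\<lambda>i. c * a i) = (\<lambda>i. c * matvec n M a i)"
  by (simp add: matvec_def sum_distrib_left mult_ac)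

lemma matvec_basis: "k < n \<Longrightarrow> matvec n M (basis_fn k) = (\<lambda>i. M i k)"
proof (rule ext)
  fix i assume k: "k < n"
  have "matvec n M (basis_fn k) i = (\<Sum>j<n. if j = k then M i j else 0)"
    unfolding matvec_def basis_fn_def by (rule sum.cong) auto
  then show "matvec n M (basis_fn k) i = M i k" using k by simp
qed

lemma matvec_mat_add: "matvec n (\<lambda>i j. A i j + B i j) v = (\<lambda>i. matvec n A v i + matvec n B v i)"
  by (simp add: matvec_def distrib_right sum.distrib)

lemma matvec_minus_rank1:
  "matvec n (\<lambda>i j. A i j - a i * cnj (b j)) v = (\<lambda>i. matvec n A v i - a i * cinner n b v)"
  by (rule ext) (simp add: matvec_def cinner_def sum_subtractf sum_distrib_left algebra_simps)

lemma quad_form_basis: "k < n \<Longrightarrow> quad_form n M (basis_fn k) = M k k"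
  by (simp add: matvec_basis cinner_basis_left)

lemma quad_form_add_scaled:
  "quad_form n M (\<lambda>i. u i + l * v i) =
   quad_form n M u + l * cinner n u (matvec n M v) + cnj l * cinner n v (matvec n M u)
   + cnj l * l * quad_form n M v"
  by (simp add: matvec_add matvec_scale cinner_add_left cinner_add_right cinner_scale_left
      cinner_scale_right algebra_simps)

lemma quad_form_minus_rank1:
  "quad_form n (\<lambda>i j. A i j - a i * cnj (b j)) u = quad_form n A u - cinner n u a * cinner n b u"
  unfolding matvec_minus_rank1 cinner_diff_right by (subst mult.commute) (simp add: cinner_scale_right)

lemma mult_cnj_eq_norm_sq: "x * cnj x = complex_of_real ((cmod x)^2)"
  by (metis complex_norm_square of_real_power)

lemma Re_quad_form_minus_rank1:
  "Re (quad_form n (\<lambda>i j. A i j - a i * cnj (a j)) u) = Re (quad_form n A u) - (cmod (cinner n u a))^2"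
  unfolding quad_form_minus_rank1
  by (subst (2) cinner_commute) (simp only: mult_cnj_eq_norm_sq minus_complex.sel Re_complex_of_real)

lemma hermitian_fn_cinner_swap:
  assumes "hermitian_fn n M"
  shows "cinner n u (matvec n M v) = cnj (cinner n v (matvec n M u))"
proof -
  have "cinner n u (matvec n M v) = (\<Sum>i<n. \<Sum>j<n. cnj (u i) * M i j * v j)"
    by (simp add: cinner_def matvec_def sum_distrib_left mult_ac)
  also have "\<dots> = (\<Sum>j<n. \<Sum>i<n. cnj (u i) * M i j * v j)" by (rule sum.swap)
  also have "\<dots> = (\<Sum>j<n. \<Sum>i<n. v j * cnj (M j i) * cnj (u i))"
  proof (intro sum.cong refl)
    fix j i assume "j \<in> {..<n}" "i \<in> {..<n}"
    then have "M i j = cnj (M j i)" using assms unfolding hermitian_fn_def by blast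
    then show "cnj (u i) * M i j * v j = v j * cnj (M j i) * cnj (u i)" by (simp add: mult_ac)
  qed
  also have "\<dots> = cnj (cinner n v (matvec n M u))"
    by (simp add: cinner_def matvec_def sum_distrib_left mult_ac)
  finally show ?thesis .
qed

lemma hermitian_fn_minus_rank1: "hermitian_fn n A \<Longrightarrow> hermitian_fn n (\<lambda>i j. A i j - a i * cnj (a j))"
  unfolding hermitian_fn_def by (metis complex_cnj_cnj complex_cnj_diff complex_cnj_mult mult.commute)

lemma psd_fn_quad_form_real: "psd_fn n M \<Longrightarrow> quad_form n M u = complex_of_real (Re (quad_form n M u))"
  using hermitian_fn_cinner_swap[of n M u u] unfolding psd_fn_def
  by (metis Reals_cnj_iff complex_is_Real_iff complex_eq_iff Re_complex_of_real Im_complex_of_real)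

lemma psd_fn_minus_rank1_iff:
  assumes "hermitian_fn n M"
  shows "psd_fn n (\<lambda>i j. M i j - a i * cnj (a j)) \<longleftrightarrow>
    (\<forall>u. (cmod (cinner n u a))^2 \<le> Re (quad_form n M u))"
  using hermitian_fn_minus_rank1[OF assms] unfolding psd_fn_def Re_quad_form_minus_rank1 by simp

lemma nonneg_quadratic_discriminant:
  fixes a c :: real and b :: complex
  assumes "\<And>l. 0 \<le> a + Re (l * b + cnj l * cnj b) + (cmod l)^2 * c" and "0 \<le> c"
  shows "(cmod b)^2 \<le> a * c"
proof -
  have key: "Re (complex_of_real r * cnj b * b + cnj (complex_of_real r * cnj b) * cnj b)
      = 2 * r * (cmod b)^2" for r
    using cmod_power2[of b] by (simp add: algebra_simps power2_eq_square)
  have nm: "(cmod (complex_of_real r * cnj b))^2 = r^2 * (cmod b)^2" for r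
    by (simp add: norm_mult power_mult_distrib)
  have real_line: "0 \<le> a + 2 * r * (cmod b)^2 + r^2 * (cmod b)^2 * c" for r
    using assms(1)[of "complex_of_real r * cnj b"] unfolding key nm .
  show ?thesis
  proof (cases "c > 0")
    case True
    have "0 \<le> a + 2 * (- 1 / c) * (cmod b)^2 + (- 1 / c)^2 * (cmod b)^2 * c" by (rule real_line)
    also have "(- 1 / c)^2 * (cmod b)^2 * c = (cmod b)^2 / c" using True by (simp add: power2_eq_square)
    finally have "0 \<le> a - (cmod b)^2 / c" by simp
    then show ?thesis using True by (simp add: field_simps)
  next
    case False
    then have c0: "c = 0" using assms(2) by simp
    show ?thesis
    proof (rule ccontr)
      assume "\<not> ?thesis"
      then have b_pos: "(cmod b)^2 > 0" using c0 by auto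
      define t where "t = - (a + 1) / (2 * (cmod b)^2)"
      have "0 \<le> a + 2 * t * (cmod b)^2" using real_line[of t] c0 by simp
      also have "2 * t * (cmod b)^2 = - (a + 1)" using b_pos by (simp add: t_def)
      finally show False by simp
    qed
  qed
qed

lemma psd_fn_cauchy_schwarz:
  assumes "psd_fn n M"
  shows "(cmod (cinner n u (matvec n M v)))^2 \<le> Re (quad_form n M u) * Re (quad_form n M v)"
proof (rule nonneg_quadratic_discriminant)
  show "0 \<le> Re (quad_form n M v)" using assms unfolding psd_fn_def by blast
  fix l
  define r where "r = Re (quad_form n M v)"
  have nonneg: "0 \<le> Re (quad_form n M (\<lambda>i. u i + l * v i))"
    using assms unfolding psd_fn_def by blast
  have swap: "cinner n v (matvec n M u) = cnj (cinner n u (matvec n M v))"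
    using hermitian_fn_cinner_swap[of n M v u] assms unfolding psd_fn_def by blast
  have qv: "quad_form n M v = complex_of_real r"
    unfolding r_def by (rule psd_fn_quad_form_real[OF assms])
  have ll: "cnj l * l = complex_of_real ((cmod l)^2)"
    by (subst complex_norm_square) (rule mult.commute)
  have expand: "quad_form n M (\<lambda>i. u i + l * v i) =
      quad_form n M u + (l * cinner n u (matvec n M v) + cnj l * cnj (cinner n u (matvec n M v)))
      + complex_of_real ((cmod l)^2) * complex_of_real r"
    unfolding quad_form_add_scaled swap qv ll[symmetric] by (simp add: algebra_simps)
  show "0 \<le> Re (quad_form n M u)
      + Re (l * cinner n u (matvec n M v) + cnj l * cnj (cinner n u (matvec n M v)))
      + (cmod l)\<^sup>2 * Re (quad_form n M v)"
    using nonneg unfolding expand r_def[symmetric]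
    by (simp only: plus_complex.sel(1) of_real_mult[symmetric] Re_complex_of_real)
qed

lemma psd_fn_diag:
  assumes "psd_fn n M" "k < n"
  shows "M k k = complex_of_real (Re (M k k))" "0 \<le> Re (M k k)"
  using psd_fn_quad_form_real[OF assms(1), of "basis_fn k"] assms(1) quad_form_basis[OF assms(2), of M]
  unfolding psd_fn_def by metis+

lemma psd_fn_zero_diag:
  assumes psd: "psd_fn n M" and k: "k < n" and i: "i < n" and z: "M k k = 0"
  shows "M i k = 0" "M k i = 0"
proof -
  have "(cmod (cinner n (basis_fn i) (matvec n M (basis_fn k))))^2
      \<le> Re (quad_form n M (basis_fn i)) * Re (quad_form n M (basis_fn k))"
    by (rule psd_fn_cauchy_schwarz[OF psd])
  then have "(cmod (M i k))^2 \<le> 0" using z i k by (simp add: quad_form_basis matvec_basis cinner_basis_left)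
  then show "M i k = 0" by simp
  then show "M k i = 0" using psd i k unfolding psd_fn_def hermitian_fn_def by (metis complex_cnj_zero)
qed

definition vanishes_before :: "nat \<Rightarrow> nat \<Rightarrow> (nat \<Rightarrow> nat \<Rightarrow> complex) \<Rightarrow> bool" where
  "vanishes_before n k M \<longleftrightarrow> (\<forall>i<n. \<forall>j<n. (i < k \<or> j < k) \<longrightarrow> M i j = 0)"

lemma vanishes_before_Suc_if_zero_diag:
  assumes "psd_fn n M" "k < n" "M k k = 0" "vanishes_before n k M"
  shows "vanishes_before n (Suc k) M"
  unfolding vanishes_before_def
proof (intro allI impI)
  fix i j assume ij: "i < n" "j < n" "i < Suc k \<or> j < Suc k"
  then consider "i < k \<or> j < k" | "i = k" | "j = k" by linarith
  then show "M i j = 0"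
  proof cases
    case 1 then show ?thesis using assms(4) ij unfolding vanishes_before_def by blast
  next
    case 2 then show ?thesis using psd_fn_zero_diag(2)[OF assms(1,2) ij(2) assms(3)] by simp
  next
    case 3 then show ?thesis using psd_fn_zero_diag(1)[OF assms(1,2) ij(1) assms(3)] by simp
  qed
qed

lemma psd_fn_pivot_column:
  assumes psd: "psd_fn n M" and k: "k < n" and nz: "M k k \<noteq> 0"
  defines "s \<equiv> sqrt (Re (M k k))"
  defines "c \<equiv> (\<lambda>i. M i k / complex_of_real s)"
  shows "s > 0" "M k k = complex_of_real s * complex_of_real s"
    "\<And>u. cinner n c u = matvec n M u k / complex_of_real s"
proof -
  have real: "M k k = complex_of_real (Re (M k k))" and nonneg: "0 \<le> Re (M k k)"
    using psd_fn_diag[OF psd k] by auto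
  have pos: "Re (M k k) > 0" using real nonneg nz by (metis less_eq_real_def of_real_0)
  then show "s > 0" unfolding s_def by simp
  have "s * s = Re (M k k)" unfolding s_def using pos by simp
  then show "M k k = complex_of_real s * complex_of_real s" using real by (metis of_real_mult)
  have herm: "M k i = cnj (M i k)" if "i < n" for i
    using psd k that unfolding psd_fn_def hermitian_fn_def by blast
  show "cinner n c u = matvec n M u k / complex_of_real s" for u
  proof -
    have "cinner n c u = (\<Sum>i<n. M k i * u i / complex_of_real s)"
      unfolding cinner_def c_def by (rule sum.cong) (auto simp: herm)
    then show ?thesis by (simp add: matvec_def sum_divide_distrib)
  qed
qed

text \<open>One step of the Cholesky factorisation.\<close>

lemma psd_fn_pivot_step:
  assumes psd: "psd_fn n M" and k: "k < n" and nz: "M k k \<noteq> 0"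
    and before: "vanishes_before n k M"
  defines "s \<equiv> sqrt (Re (M k k))"
  defines "c \<equiv> (\<lambda>i. M i k / complex_of_real s)"
  shows "psd_fn n (\<lambda>i j. M i j - c i * cnj (c j))"
    "vanishes_before n (Suc k) (\<lambda>i j. M i j - c i * cnj (c j))"
proof -
  note col = psd_fn_pivot_column[OF psd k nz, folded s_def, folded c_def]
  have herm: "M i j = cnj (M j i)" if "i < n" "j < n" for i j
    using psd that unfolding psd_fn_def hermitian_fn_def by blast
  have S0: "complex_of_real s \<noteq> 0" using col(1) by simp
  have ck: "c k = complex_of_real s" unfolding c_def col(2) using S0 by simp
  show "psd_fn n (\<lambda>i j. M i j - c i * cnj (c j))"
    unfolding psd_fn_minus_rank1_iff[OF psd[unfolded psd_fn_def, THEN conjunct1]]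
  proof
    fix u
    define m where "m = matvec n M u k"
    have "(cmod (cinner n (basis_fn k) (matvec n M u)))^2
        \<le> Re (quad_form n M (basis_fn k)) * Re (quad_form n M u)"
      by (rule psd_fn_cauchy_schwarz[OF psd])
    then have "(cmod m)^2 \<le> s * s * Re (quad_form n M u)"
      using k col(2) by (simp add: matvec_basis cinner_basis_left m_def quad_form_basis)
    moreover have "(cmod (cinner n u c))^2 = (cmod m)^2 / (s * s)"
      by (subst cinner_commute) (simp add: col(3) m_def norm_divide power_divide power2_eq_square)
    ultimately show "(cmod (cinner n u c))^2 \<le> Re (quad_form n M u)"
      using col(1) by (simp add: divide_le_eq mult_ac)
  qed
  show "vanishes_before n (Suc k) (\<lambda>i j. M i j - c i * cnj (c j))"
    unfolding vanishes_before_def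
  proof (intro allI impI)
    fix i j assume ij: "i < n" "j < n" and "i < Suc k \<or> j < Suc k"
    then consider "i < k \<or> j < k" | "i = k" | "j = k" by linarith
    then show "M i j - c i * cnj (c j) = 0"
    proof cases
      case 1 then show ?thesis using before ij k unfolding vanishes_before_def c_def by auto
    next
      case 2
      have "cnj (c j) = M k j / complex_of_real s" unfolding c_def using herm[OF k ij(2)] by simp
      then show ?thesis using 2 ck S0 by simp
    next
      case 3
      show ?thesis using 3 ck S0 by (simp add: c_def)
    qed
  qed
qed

lemma psd_fn_gram_from:
  "n - k = m \<Longrightarrow> psd_fn n M \<Longrightarrow> vanishes_before n k M \<Longrightarrow>
    \<exists>us. \<forall>i<n. \<forall>j<n. M i j = (\<Sum>u\<leftarrow>us. u i * cnj (u j))"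
proof (induction m arbitrary: k M)
  case 0
  then have "\<forall>i<n. \<forall>j<n. M i j = 0" unfolding vanishes_before_def by auto
  then show ?case by (intro exI[of _ "[]"]) simp
next
  case (Suc m)
  then have k: "k < n" by simp
  have nk: "n - Suc k = m" using Suc.prems(1) by simp
  show ?case
  proof (cases "M k k = 0")
    case True
    show ?thesis
      using Suc.IH[OF nk Suc.prems(2) vanishes_before_Suc_if_zero_diag[OF Suc.prems(2) k True Suc.prems(3)]] .
  next
    case False
    define c where "c = (\<lambda>i. M i k / complex_of_real (sqrt (Re (M k k))))"
    have "psd_fn n (\<lambda>i j. M i j - c i * cnj (c j))"
      "vanishes_before n (Suc k) (\<lambda>i j. M i j - c i * cnj (c j))"
      using psd_fn_pivot_step[OF Suc.prems(2) k False Suc.prems(3)] unfolding c_def by simp_all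
    then obtain us where us: "\<forall>i<n. \<forall>j<n. M i j - c i * cnj (c j) = (\<Sum>u\<leftarrow>us. u i * cnj (u j))"
      using Suc.IH[OF nk] by blast
    show ?thesis
    proof (intro exI[of _ "c # us"] allI impI)
      fix i j assume "i < n" "j < n"
      then have "M i j - c i * cnj (c j) = (\<Sum>u\<leftarrow>us. u i * cnj (u j))" using us by blast
      then show "M i j = (\<Sum>u\<leftarrow>c # us. u i * cnj (u j))" by (simp add: algebra_simps)
    qed
  qed
qed

lemma psd_fn_gram: "psd_fn n M \<Longrightarrow> \<exists>us. \<forall>i<n. \<forall>j<n. M i j = (\<Sum>u\<leftarrow>us. u i * cnj (u j))"
  using psd_fn_gram_from[of n 0 n M] by (simp add: vanishes_before_def)

text \<open>The domination |<u, w>|^2 \<le> <u, Y u> passes to w' = w - (w k / s) c and Y' = Y - c c*,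
  since <u, w'> = <u', w> and <u, Y' u> = <u', Y u'> for u' = u - ((Y u) k / Y k k) e_k.\<close>

lemma dominated_after_pivot:
  assumes psd: "psd_fn n Y" and k: "k < n" and nz: "Y k k \<noteq> 0"
    and dom: "\<forall>u. (cmod (cinner n u w))^2 \<le> Re (quad_form n Y u)"
  defines "s \<equiv> sqrt (Re (Y k k))"
  defines "c \<equiv> (\<lambda>i. Y i k / complex_of_real s)"
  shows "(cmod (cinner n u (\<lambda>i. w i - (w k / complex_of_real s) * c i)))^2
    \<le> Re (quad_form n (\<lambda>i j. Y i j - c i * cnj (c j)) u)"
proof -
  note col = psd_fn_pivot_column[OF psd k nz, folded s_def, folded c_def]
  define S where "S = complex_of_real s"
  have S0: "S \<noteq> 0" using col(1) by (simp add: S_def)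
  have cS: "cnj S = S" by (simp add: S_def)
  have SS: "quad_form n Y (basis_fn k) = S * S" using quad_form_basis[OF k] col(2) by (simp add: S_def)
  have cinner_c: "cinner n c v = matvec n Y v k / S" for v using col(3) unfolding S_def .
  have herm: "hermitian_fn n Y" using psd unfolding psd_fn_def by blast
  define m where "m = matvec n Y u k"
  define t where "t = m / (S * S)"
  define u' where "u' = (\<lambda>i. u i + (- t) * basis_fn k i)"
  have "cinner n u (\<lambda>i. w i - (w k / S) * c i) = cinner n u w - (w k / S) * cnj (m / S)"
    unfolding cinner_diff_right cinner_scale_right
    by (subst cinner_commute) (simp add: cinner_c m_def)
  also have "\<dots> = cinner n u' w"
    unfolding u'_def cinner_add_left cinner_scale_left cinner_basis_left[OF k] t_def
    using cS by (simp add: field_simps)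
  finally have inner: "cinner n u (\<lambda>i. w i - (w k / S) * c i) = cinner n u' w" .
  have h1: "cinner n u (matvec n Y (basis_fn k)) = cnj m"
    using hermitian_fn_cinner_swap[OF herm, of u "basis_fn k"] by (simp add: cinner_basis_left[OF k] m_def)
  have h2: "cinner n (basis_fn k) (matvec n Y u) = m" by (simp add: cinner_basis_left[OF k] m_def)
  have quad: "quad_form n Y u' = quad_form n (\<lambda>i j. Y i j - c i * cnj (c j)) u"
    unfolding u'_def quad_form_add_scaled quad_form_minus_rank1 h1 h2 SS
    using S0 cS by (subst cinner_commute) (simp add: cinner_c m_def[symmetric] t_def field_simps)
  show ?thesis using dom unfolding inner[unfolded S_def] quad[symmetric] by blast
qed

lemma solution_after_pivot:
  assumes k: "k < n" and pos: "s > 0"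
    and sol: "\<forall>i<n. matvec n (\<lambda>i j. Y i j - c i * cnj (c j)) z' i = w i - (w k / complex_of_real s) * c i"
    and c: "c = (\<lambda>i. Y i k / complex_of_real s)"
    and cinner_c: "\<And>u. cinner n c u = matvec n Y u k / complex_of_real s"
  shows "\<exists>z. \<forall>i<n. matvec n Y z i = w i"
proof -
  define S where "S = complex_of_real s"
  have S0: "S \<noteq> 0" using pos by (simp add: S_def)
  define d where "d = (w k - matvec n Y z' k) / (S * S)"
  show ?thesis
  proof (intro exI[of _ "\<lambda>i. z' i + d * basis_fn k i"] allI impI)
    fix i assume i: "i < n"
    have shifted: "matvec n Y (\<lambda>i. z' i + d * basis_fn k i) i = matvec n Y z' i + d * Y i k"
      by (simp add: matvec_add matvec_scale matvec_basis[OF k])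
    have "matvec n (\<lambda>i j. Y i j - c i * cnj (c j)) z' i = matvec n Y z' i - c i * (matvec n Y z' k / S)"
      unfolding matvec_minus_rank1 cinner_c S_def ..
    moreover have "matvec n (\<lambda>i j. Y i j - c i * cnj (c j)) z' i = w i - (w k / S) * c i"
      using sol i unfolding S_def by blast
    ultimately have "matvec n Y z' i = w i - (w k / S) * c i + c i * (matvec n Y z' k / S)"
      by (simp add: algebra_simps)
    moreover have "c i = Y i k / S" unfolding c S_def ..
    ultimately have "matvec n Y z' i + d * Y i k = w i"
      unfolding d_def using S0 by (simp add: field_simps)
    then show "matvec n Y (\<lambda>i. z' i + d * basis_fn k i) i = w i" unfolding shifted .
  qed
qed

lemma psd_fn_range_from:
  "n - k = m \<Longrightarrow> psd_fn n Y \<Longrightarrow> (\<forall>u. (cmod (cinner n u w))^2 \<le> Re (quad_form n Y u)) \<Longrightarrow>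
    vanishes_before n k Y \<Longrightarrow> \<exists>z. \<forall>i<n. matvec n Y z i = w i"
proof (induction m arbitrary: k Y w)
  case 0
  then have Y0: "\<forall>i<n. \<forall>j<n. Y i j = 0" unfolding vanishes_before_def by auto
  show ?case
  proof (intro exI[of _ "\<lambda>_. 0"] allI impI)
    fix i assume i: "i < n"
    have "(cmod (cinner n (basis_fn i) w))^2 \<le> Re (quad_form n Y (basis_fn i))" using 0 by blast
    then have "(cmod (w i))^2 \<le> 0" using i Y0 by (simp add: cinner_basis_left matvec_basis)
    then show "matvec n Y (\<lambda>_. 0) i = w i" by (simp add: matvec_def)
  qed
next
  case (Suc m)
  then have k: "k < n" by simp
  have nk: "n - Suc k = m" using Suc.prems(1) by simp
  show ?case
  proof (cases "Y k k = 0")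
    case True
    show ?thesis
      using Suc.IH[OF nk Suc.prems(2,3) vanishes_before_Suc_if_zero_diag[OF Suc.prems(2) k True Suc.prems(4)]] .
  next
    case False
    define s where "s = sqrt (Re (Y k k))"
    define c where "c = (\<lambda>i. Y i k / complex_of_real s)"
    note col = psd_fn_pivot_column[OF Suc.prems(2) k False, folded s_def, folded c_def]
    have step: "psd_fn n (\<lambda>i j. Y i j - c i * cnj (c j))"
      "vanishes_before n (Suc k) (\<lambda>i j. Y i j - c i * cnj (c j))"
      using psd_fn_pivot_step[OF Suc.prems(2) k False Suc.prems(4)] unfolding c_def s_def by simp_all
    have "\<forall>u. (cmod (cinner n u (\<lambda>i. w i - (w k / complex_of_real s) * c i)))^2
        \<le> Re (quad_form n (\<lambda>i j. Y i j - c i * cnj (c j)) u)"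
      using dominated_after_pivot[OF Suc.prems(2) k False Suc.prems(3)] unfolding c_def s_def by simp
    then obtain z' where "\<forall>i<n. matvec n (\<lambda>i j. Y i j - c i * cnj (c j)) z' i = w i - (w k / complex_of_real s) * c i"
      using Suc.IH[OF nk step(1) _ step(2)] by blast
    from solution_after_pivot[OF k col(1) this c_def col(3)] show ?thesis .
  qed
qed

lemma psd_fn_range:
  "psd_fn n Y \<Longrightarrow> (\<forall>u. (cmod (cinner n u w))^2 \<le> Re (quad_form n Y u)) \<Longrightarrow> \<exists>z. \<forall>i<n. matvec n Y z i = w i"
  using psd_fn_range_from[of n 0 n Y w] by (simp add: vanishes_before_def)

lemma sum_zero_extend: "(n::nat) \<le> N \<Longrightarrow> (\<Sum>i<N. if i < n then f i else 0) = (\<Sum>i<n. (f i :: complex))"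
proof -
  assume "n \<le> N"
  then have "{..<N} \<inter> {i. i < n} = {..<n}" by auto
  then show ?thesis by (simp add: sum.If_cases)
qed

lemma matvec_zero_extend: "n \<le> N \<Longrightarrow> matvec N X (\<lambda>i. if i < n then z i else 0) = matvec n X z"
proof (rule ext)
  fix i assume nN: "n \<le> N"
  have "(\<Sum>j<N. X i j * (if j < n then z j else 0)) = (\<Sum>j<N. if j < n then X i j * z j else 0)"
    by (rule sum.cong) auto
  then show "matvec N X (\<lambda>i. if i < n then z i else 0) i = matvec n X z i"
    unfolding matvec_def by (rule trans[OF _ sum_zero_extend[OF nN]])
qed

lemma cinner_zero_extend_left: "n \<le> N \<Longrightarrow> cinner N (\<lambda>i. if i < n then z i else 0) f = cinner n z f"
proof -
  assume nN: "n \<le> N"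
  have "(\<Sum>j<N. cnj (if j < n then z j else 0) * f j) = (\<Sum>j<N. if j < n then cnj (z j) * f j else 0)"
    by (rule sum.cong) auto
  then show ?thesis unfolding cinner_def by (rule trans[OF _ sum_zero_extend[OF nN]])
qed

lemma psd_fn_restrict:
  assumes "psd_fn N X" "n \<le> N"
  shows "psd_fn n X"
  unfolding psd_fn_def
proof (intro conjI allI)
  show "hermitian_fn n X" using assms unfolding psd_fn_def hermitian_fn_def by (meson order_less_le_trans)
  fix v
  have "0 \<le> Re (quad_form N X (\<lambda>i. if i < n then v i else 0))"
    using assms(1) unfolding psd_fn_def by blast
  then show "0 \<le> Re (quad_form n X v)" using assms(2) by (simp add: matvec_zero_extend cinner_zero_extend_left)
qed

lemma psd_fn_cong:
  assumes "psd_fn n M" "\<forall>i<n. \<forall>j<n. M i j = M' i j"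
  shows "psd_fn n M'"
  unfolding psd_fn_def
proof (intro conjI allI)
  show "hermitian_fn n M'" unfolding hermitian_fn_def
  proof (intro allI impI)
    fix i j assume "i < n" "j < n"
    then have "M i j = cnj (M j i)" "M i j = M' i j" "M j i = M' j i"
      using assms unfolding psd_fn_def hermitian_fn_def by blast+
    then show "M' i j = cnj (M' j i)" by metis
  qed
  fix v
  have "quad_form n M' v = quad_form n M v"
    by (rule cinner_cong_right) (use assms(2) in \<open>simp add: matvec_def\<close>)
  then show "0 \<le> Re (quad_form n M' v)" using assms(1) unfolding psd_fn_def by simp
qed

lemma psd_fn_add:
  assumes "psd_fn n A" "psd_fn n B"
  shows "psd_fn n (\<lambda>i j. A i j + B i j)"
  unfolding psd_fn_def
proof (intro conjI allI)
  show "hermitian_fn n (\<lambda>i j. A i j + B i j)"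
    using assms unfolding psd_fn_def hermitian_fn_def by (metis complex_cnj_add)
  fix v
  show "0 \<le> Re (quad_form n (\<lambda>i j. A i j + B i j) v)"
    using assms unfolding psd_fn_def by (simp add: matvec_mat_add cinner_add_right)
qed

lemma psd_fn_rank1: "psd_fn n (\<lambda>i j. a i * cnj (a j))"
  unfolding psd_fn_def
proof (intro conjI allI)
  show "hermitian_fn n (\<lambda>i j. a i * cnj (a j))" unfolding hermitian_fn_def by simp
  fix v
  have "matvec n (\<lambda>i j. a i * cnj (a j)) v = (\<lambda>i. cinner n a v * a i)"
    by (rule ext) (simp add: matvec_def cinner_def sum_distrib_left mult_ac)
  then have "quad_form n (\<lambda>i j. a i * cnj (a j)) v = cinner n a v * cinner n v a"
    by (simp add: cinner_scale_right)
  also have "\<dots> = complex_of_real ((cmod (cinner n a v))^2)"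
    by (subst (2) cinner_commute) (rule mult_cnj_eq_norm_sq)
  finally show "0 \<le> Re (quad_form n (\<lambda>i j. a i * cnj (a j)) v)" by simp
qed

lemma psd_fn_gram_sum: "psd_fn n (\<lambda>i j. \<Sum>u\<leftarrow>us. u i * cnj (u j))"
proof (induction us)
  case Nil then show ?case unfolding psd_fn_def hermitian_fn_def by (simp add: matvec_def cinner_def)
next
  case (Cons a us)
  then show ?case using psd_fn_add[OF psd_fn_rank1[of n a] Cons] by simp
qed

text \<open>If X z = w, the domination |<u, w>|^2 \<le> <u, X u> applied at u = z gives
  <z, X z>^2 \<le> <z, X z>.\<close>

lemma quad_form_preimage_le_one:
  assumes psd: "psd_fn n X" and dom: "\<forall>u. (cmod (cinner n u w))^2 \<le> Re (quad_form n X u)"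
    and z: "\<forall>i<n. matvec n X z i = w i"
  shows "Re (quad_form n X z) \<le> 1"
proof -
  define q where "q = quad_form n X z"
  have zw: "q = cinner n z w" unfolding q_def by (rule cinner_cong_right) (use z in simp)
  have real: "q = complex_of_real (Re q)" unfolding q_def by (rule psd_fn_quad_form_real[OF psd])
  have nonneg: "0 \<le> Re q" using psd unfolding psd_fn_def q_def by blast
  have "(cmod (cinner n z w))^2 \<le> Re q" using dom unfolding q_def by blast
  then have "(cmod q)^2 \<le> Re q" by (metis zw)
  moreover have "cmod q = Re q" using real nonneg by (metis norm_of_real abs_of_nonneg)
  ultimately have "Re q * Re q \<le> Re q * 1" by (simp add: power2_eq_square)
  then show ?thesis using nonneg unfolding q_def
    by (metis less_eq_real_def mult_le_cancel_left_pos order.refl zero_le_one)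
qed

text \<open>Take v = X z', where z' is a preimage of w under the leading block, padded by zeros.\<close>

lemma psd_fn_extend_rank1:
  assumes psd: "psd_fn N X" and nN: "n \<le> N" and pw: "psd_fn n (\<lambda>i j. X i j - w i * cnj (w j))"
  shows "\<exists>v. (\<forall>r<n. v r = w r) \<and> psd_fn N (\<lambda>i j. X i j - v i * cnj (v j))"
proof -
  have psd_n: "psd_fn n X" by (rule psd_fn_restrict[OF psd nN])
  have herm: "hermitian_fn n X" "hermitian_fn N X" using psd psd_n unfolding psd_fn_def by blast+
  have dom: "\<forall>u. (cmod (cinner n u w))^2 \<le> Re (quad_form n X u)"
    using pw unfolding psd_fn_minus_rank1_iff[OF herm(1)] .
  obtain z where z: "\<forall>i<n. matvec n X z i = w i" using psd_fn_range[OF psd_n dom] by blast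
  define z' where "z' = (\<lambda>i. if i < n then z i else 0)"
  define v where "v = matvec N X z'"
  have vz: "v = matvec n X z" unfolding v_def z'_def by (rule matvec_zero_extend[OF nN])
  have quad_z': "quad_form N X z' = quad_form n X z"
    unfolding z'_def matvec_zero_extend[OF nN] cinner_zero_extend_left[OF nN] ..
  have le1: "Re (quad_form N X z') \<le> 1"
    unfolding quad_z' by (rule quad_form_preimage_le_one[OF psd_n dom z])
  show ?thesis
  proof (intro exI conjI allI impI)
    fix r assume "r < n" then show "v r = w r" using z vz by simp
  next
    show "psd_fn N (\<lambda>i j. X i j - v i * cnj (v j))"
      unfolding psd_fn_minus_rank1_iff[OF herm(2)]
    proof
      fix u
      have "(cmod (cinner N u v))^2 \<le> Re (quad_form N X u) * Re (quad_form N X z')"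
        unfolding v_def by (rule psd_fn_cauchy_schwarz[OF psd])
      also have "\<dots> \<le> Re (quad_form N X u)"
        using le1 psd unfolding psd_fn_def by (simp add: mult_left_le)
      finally show "(cmod (cinner N u v))^2 \<le> Re (quad_form N X u)" .
    qed
  qed
qed

lemma psd_fn_extend_gram:
  "psd_fn N X \<Longrightarrow> n \<le> N \<Longrightarrow> (\<forall>r<n. \<forall>c<n. X r c = (\<Sum>w\<leftarrow>ws. w r * cnj (w c))) \<Longrightarrow>
    \<exists>vs. list_all2 (\<lambda>v w. \<forall>r<n. v r = w r) vs ws \<and>
      psd_fn N (\<lambda>r c. X r c - (\<Sum>v\<leftarrow>vs. v r * cnj (v c)))"
proof (induction ws arbitrary: X)
  case Nil
  then show ?case by (intro exI[of _ "[]"]) simp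
next
  case (Cons w ws)
  have "psd_fn n (\<lambda>i j. X i j - w i * cnj (w j))"
    by (rule psd_fn_cong[OF psd_fn_gram_sum[of n ws]]) (use Cons.prems(3) in simp)
  then obtain v where v: "\<forall>r<n. v r = w r" "psd_fn N (\<lambda>i j. X i j - v i * cnj (v j))"
    using psd_fn_extend_rank1[OF Cons.prems(1,2)] by blast
  have "\<forall>r<n. \<forall>c<n. X r c - v r * cnj (v c) = (\<Sum>w\<leftarrow>ws. w r * cnj (w c))"
    using Cons.prems(3) v(1) by simp
  then obtain vs where vs: "list_all2 (\<lambda>v w. \<forall>r<n. v r = w r) vs ws"
    "psd_fn N (\<lambda>r c. (X r c - v r * cnj (v c)) - (\<Sum>v\<leftarrow>vs. v r * cnj (v c)))"
    using Cons.IH[OF v(2) Cons.prems(2)] by blast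
  show ?case
  proof (intro exI[of _ "v # vs"] conjI)
    show "list_all2 (\<lambda>v w. \<forall>r<n. v r = w r) (v # vs) (w # ws)" using vs(1) v(1) by simp
    show "psd_fn N (\<lambda>r c. X r c - (\<Sum>v\<leftarrow>v # vs. v r * cnj (v c)))"
      using vs(2) by (simp add: algebra_simps)
  qed
qed

lemma gram_sum_eq_if_agree:
  "list_all2 (\<lambda>v w. \<forall>r<n. v r = w r) vs ws \<Longrightarrow> r < n \<Longrightarrow> c < n \<Longrightarrow>
    (\<Sum>v\<leftarrow>vs. v r * cnj (v c)) = (\<Sum>w\<leftarrow>ws. w r * cnj (w c))"
  by (induction rule: list_all2_induct) auto

lemma gram_sum_diag_eq_0_iff: "(\<Sum>u\<leftarrow>us. u r * cnj (u r)) = 0 \<longleftrightarrow> (\<forall>u\<in>set us. u r = 0)"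
proof -
  have "(\<Sum>u\<leftarrow>us. u r * cnj (u r)) = complex_of_real (\<Sum>u\<leftarrow>us. (cmod (u r))^2)"
    by (induction us) (auto simp: mult_cnj_eq_norm_sq)
  moreover have "(\<Sum>u\<leftarrow>us. (cmod (u r))^2) = 0 \<longleftrightarrow> (\<forall>u\<in>set us. u r = 0)"
    using sum_list_nonneg_eq_0_iff[of "map (\<lambda>u. (cmod (u r))^2) us"] by force
  ultimately show ?thesis by simp
qed

lemma psd_fn_extend_gram_complement:
  assumes "psd_fn N X" "n \<le> N" "\<forall>r<n. \<forall>c<n. X r c = (\<Sum>w\<leftarrow>ws. w r * cnj (w c))"
  shows "\<exists>vs us. list_all2 (\<lambda>v w. \<forall>r<n. v r = w r) vs ws \<and> (\<forall>u\<in>set us. \<forall>r<n. u r = 0) \<and>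
     (\<forall>r<N. \<forall>c<N. X r c = (\<Sum>x\<leftarrow>vs @ us. x r * cnj (x c)))"
proof -
  obtain vs where vs: "list_all2 (\<lambda>v w. \<forall>r<n. v r = w r) vs ws"
    "psd_fn N (\<lambda>r c. X r c - (\<Sum>v\<leftarrow>vs. v r * cnj (v c)))"
    using psd_fn_extend_gram[OF assms] by blast
  obtain us where us: "\<forall>i<N. \<forall>j<N. X i j - (\<Sum>v\<leftarrow>vs. v i * cnj (v j)) = (\<Sum>u\<leftarrow>us. u i * cnj (u j))"
    using psd_fn_gram[OF vs(2)] by blast
  show ?thesis
  proof (intro exI conjI ballI allI impI)
    show "list_all2 (\<lambda>v w. \<forall>r<n. v r = w r) vs ws" by (rule vs(1))
  next
    fix u r assume u: "u \<in> set us" and r: "r < n"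
    have "(\<Sum>u\<leftarrow>us. u r * cnj (u r)) = X r r - (\<Sum>v\<leftarrow>vs. v r * cnj (v r))"
      using us r assms(2) by simp
    also have "\<dots> = 0" using gram_sum_eq_if_agree[OF vs(1) r r] assms(3) r by simp
    finally show "u r = 0" using u unfolding gram_sum_diag_eq_0_iff by blast
  next
    fix r c assume "r < N" "c < N"
    then have "X r c - (\<Sum>v\<leftarrow>vs. v r * cnj (v c)) = (\<Sum>u\<leftarrow>us. u r * cnj (u c))" using us by blast
    then show "X r c = (\<Sum>x\<leftarrow>vs @ us. x r * cnj (x c))" by (simp add: algebra_simps)
  qed
qed

lemma rank_mat_sum_products:
  "vec_space.rank b (mat b b (\<lambda>(x, y). \<Sum>i<k. f i x * g i y :: complex)) \<le> k"
proof (induction k)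
  case 0
  have zero: "mat b b (\<lambda>(x, y). \<Sum>i<0. f i x * g i y :: complex) = 0\<^sub>m b b"
    by (rule eq_matI) auto
  show ?case unfolding zero vec_space.rank_0I by simp
next
  case (Suc k)
  have split: "mat b b (\<lambda>(x, y). \<Sum>i<Suc k. f i x * g i y :: complex) =
    mat b b (\<lambda>(x, y). \<Sum>i<k. f i x * g i y) + mat b b (\<lambda>(x, y). f k x * g k y)"
    by (rule eq_matI) auto
  have "vec_space.rank b (mat b b (\<lambda>(x, y). \<Sum>i<k. f i x * g i y) + mat b b (\<lambda>(x, y). f k x * g k y))
     \<le> vec_space.rank b (mat b b (\<lambda>(x, y). \<Sum>i<k. f i x * g i y))
       + vec_space.rank b (mat b b (\<lambda>(x, y). f k x * g k y))"
    by (rule vec_space.rank_subadditive) auto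
  moreover have "vec_space.rank b (mat b b (\<lambda>(x, y). f k x * g k y :: complex)) \<le> 1"
    by (rule vec_space.rank_le_1_product_entries[of _ b b]) auto
  ultimately show ?case using Suc.IH unfolding split by simp
qed

text \<open>The reduced state of v is the sum over i < a of the rank-one matrices v_i v_i*, where v_i is
  the i-th block of v; when the first two blocks are multiples of one vector y, their two terms
  merge into one.\<close>

lemma schmidt_rank_le_if_first_blocks_parallel:
  assumes a: "2 \<le> a" and v: "\<forall>x<b. v x = \<alpha> * y x \<and> v (b + x) = \<beta> * y x"
  shows "schmidt_rank a b (vec (a * b) v) \<le> a - 1"
proof -
  obtain a' where a': "a = Suc (Suc a')" using a by (metis add_2_eq_Suc le_Suc_ex)
  define F where "F = (\<lambda>i x. if i = 0 then (\<alpha> * cnj \<alpha> + \<beta> * cnj \<beta>) * y x else v ((i + 1) * b + x))"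
  define G where "G = (\<lambda>i x. if i = 0 then cnj (y x) else cnj (v ((i + 1) * b + x)))"
  have "ptrace_A a b (outer (a * b) (vec (a * b) v)) = mat b b (\<lambda>(x, y). \<Sum>i<Suc a'. F i x * G i y)"
  proof (rule eq_matI)
    fix x z assume "x < dim_row (mat b b (\<lambda>(x, y). \<Sum>i<Suc a'. F i x * G i y))"
      "z < dim_col (mat b b (\<lambda>(x, y). \<Sum>i<Suc a'. F i x * G i y))"
    then have x: "x < b" and z: "z < b" by auto
    have idx: "i * b + t < a * b" if "i < a" "t < b" for i t :: nat
    proof -
      have "(i + 1) * b \<le> a * b" using that by (intro mult_le_mono1) simp
      then show ?thesis using that by simp
    qed
    have "ptrace_A a b (outer (a * b) (vec (a * b) v)) $$ (x, z)
        = (\<Sum>i<a. outer (a * b) (vec (a * b) v) $$ (i * b + x, i * b + z))"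
      unfolding ptrace_A_def using x z by simp
    also have "\<dots> = (\<Sum>i<a. v (i * b + x) * cnj (v (i * b + z)))"
      by (rule sum.cong) (auto simp: outer_def idx x z)
    also have "\<dots> = (\<Sum>i<Suc a'. F i x * G i z)"
    proof -
      have "v x = \<alpha> * y x" "v (b + x) = \<beta> * y x" "v z = \<alpha> * y z" "v (b + z) = \<beta> * y z"
        using v x z by auto
      then show ?thesis unfolding a' sum.lessThan_Suc_shift
        by (simp add: F_def G_def) (simp add: algebra_simps)
    qed
    finally show "ptrace_A a b (outer (a * b) (vec (a * b) v)) $$ (x, z) =
       mat b b (\<lambda>(x, y). \<Sum>i<Suc a'. F i x * G i y) $$ (x, z)" using x z by simp
  qed (auto simp: ptrace_A_def)
  then show ?thesis
    unfolding schmidt_rank_def using rank_mat_sum_products[where b = b and k = "Suc a'" and f = F and g = G] a' by simp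
qed

lemma psd_imp_psd_fn:
  assumes "psd n A"
  shows "psd_fn n (\<lambda>i j. A $$ (i, j))"
  unfolding psd_fn_def hermitian_fn_def
proof (intro conjI allI impI)
  fix i j assume "i < n" "j < n"
  then show "A $$ (i, j) = cnj (A $$ (j, i))" using assms unfolding psd_def hermitian_def by blast
next
  fix v
  have expand: "quad_form n (\<lambda>i j. A $$ (i, j)) v
      = (\<Sum>i<n. \<Sum>j<n. cnj (vec n v $ i) * A $$ (i, j) * vec n v $ j)"
    unfolding cinner_def matvec_def sum_distrib_left by (intro sum.cong refl) (simp add: mult_ac)
  have "\<forall>w \<in> carrier_vec n. 0 \<le> Re (\<Sum>i<n. \<Sum>j<n. cnj (w $ i) * A $$ (i, j) * w $ j)"
    using assms unfolding psd_def by blast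
  then show "0 \<le> Re (quad_form n (\<lambda>i j. A $$ (i, j)) v)"
    unfolding expand by (rule bspec) simp
qed

lemma psd_fn_imp_psd:
  assumes "A \<in> carrier_mat n n" "psd_fn n (\<lambda>i j. A $$ (i, j))"
  shows "psd n A"
  unfolding psd_def hermitian_def
proof (intro conjI ballI allI impI)
  show "A \<in> carrier_mat n n" by (rule assms(1))
  fix i j assume "i < n" "j < n"
  then show "A $$ (i, j) = cnj (A $$ (j, i))" using assms unfolding psd_fn_def hermitian_fn_def by blast
next
  fix v :: "complex vec"
  have "(\<Sum>i<n. \<Sum>j<n. cnj (v $ i) * A $$ (i, j) * v $ j)
      = quad_form n (\<lambda>i j. A $$ (i, j)) (\<lambda>i. v $ i)"
    unfolding cinner_def matvec_def by (simp add: sum_distrib_left mult_ac)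
  then show "0 \<le> Re (\<Sum>i<n. \<Sum>j<n. cnj (v $ i) * A $$ (i, j) * v $ j)"
    using assms(2) unfolding psd_fn_def by simp
qed

lemma sum_list_concat_map: "(\<Sum>x\<leftarrow>concat xss. f x) = (\<Sum>xs\<leftarrow>xss. \<Sum>x\<leftarrow>xs. (f x :: 'a :: comm_monoid_add))"
  by (induction xss) auto

lemma separable_imp_gram_product_vectors:
  assumes "separable a b W"
  shows "\<exists>ws. (\<forall>w\<in>set ws. \<exists>p q. w = (\<lambda>r. p (r div b) * q (r mod b))) \<and>
    (\<forall>r<a * b. \<forall>c<a * b. W $$ (r, c) = (\<Sum>w\<leftarrow>ws. w r * cnj (w c)))"
proof -
  obtain m :: nat and P Q where PQ: "\<forall>i<m. psd a (P i) \<and> psd b (Q i)"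
    and W: "\<forall>r<a * b. \<forall>c<a * b. W $$ (r, c) = (\<Sum>i<m. kron a b (P i) (Q i) $$ (r, c))"
    using assms unfolding separable_def by blast
  have "\<forall>i\<in>{..<m}. \<exists>ps. \<forall>x<a. \<forall>y<a. P i $$ (x, y) = (\<Sum>p\<leftarrow>ps. p x * cnj (p y))"
    using PQ psd_fn_gram[OF psd_imp_psd_fn] by blast
  from bchoice[OF this] obtain ps
    where ps: "\<forall>i\<in>{..<m}. \<forall>x<a. \<forall>y<a. P i $$ (x, y) = (\<Sum>p\<leftarrow>ps i. p x * cnj (p y))"
    by blast
  have "\<forall>i\<in>{..<m}. \<exists>qs. \<forall>x<b. \<forall>y<b. Q i $$ (x, y) = (\<Sum>q\<leftarrow>qs. q x * cnj (q y))"
    using PQ psd_fn_gram[OF psd_imp_psd_fn] by blast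
  from bchoice[OF this] obtain qs
    where qs: "\<forall>i\<in>{..<m}. \<forall>x<b. \<forall>y<b. Q i $$ (x, y) = (\<Sum>q\<leftarrow>qs i. q x * cnj (q y))"
    by blast
  define ws where "ws = concat (map (\<lambda>i. concat (map (\<lambda>p. map (\<lambda>q. (\<lambda>r. p (r div b) * q (r mod b)))
    (qs i)) (ps i))) [0..<m])"
  show ?thesis
  proof (intro exI[of _ ws] conjI ballI allI impI)
    fix w assume "w \<in> set ws"
    then show "\<exists>p q. w = (\<lambda>r. p (r div b) * q (r mod b))" unfolding ws_def by auto
  next
    fix r c assume r: "r < a * b" and c: "c < a * b"
    then have b: "0 < b" by (cases b) auto
    have div: "r div b < a" "c div b < a" using r c b by (simp_all add: div_less_iff_less_mult mult.commute)
    have "(\<Sum>w\<leftarrow>ws. w r * cnj (w c)) = (\<Sum>i\<leftarrow>[0..<m]. \<Sum>p\<leftarrow>ps i. \<Sum>q\<leftarrow>qs i.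
           (p (r div b) * cnj (p (c div b))) * (q (r mod b) * cnj (q (c mod b))))"
      unfolding ws_def sum_list_concat_map by (simp add: o_def sum_list_concat_map mult_ac)
    also have "\<dots> = (\<Sum>i\<leftarrow>[0..<m]. (\<Sum>p\<leftarrow>ps i. p (r div b) * cnj (p (c div b))) *
           (\<Sum>q\<leftarrow>qs i. q (r mod b) * cnj (q (c mod b))))"
      by (simp add: sum_list_const_mult sum_list_mult_const)
    also have "\<dots> = (\<Sum>i\<leftarrow>[0..<m]. P i $$ (r div b, c div b) * Q i $$ (r mod b, c mod b))"
      by (rule arg_cong[where f = sum_list], rule map_cong[OF refl]) (use ps qs div b in simp)
    also have "\<dots> = (\<Sum>i<m. kron a b (P i) (Q i) $$ (r, c))"
      unfolding kron_def using r c by (simp add: interv_sum_list_conv_sum_set_nat atLeast0LessThan)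
    also have "\<dots> = W $$ (r, c)" using W r c by simp
    finally show "W $$ (r, c) = (\<Sum>w\<leftarrow>ws. w r * cnj (w c))" by simp
  qed
qed

lemma sum_list_map_conv_sum_nth:
  "(\<Sum>x\<leftarrow>xs. f x) = (\<Sum>i<length xs. (f (xs ! i) :: 'a :: comm_monoid_add))"
  by (induction xs) (simp_all del: sum.lessThan_Suc add: sum.lessThan_Suc_shift)

lemma schmidt_number_le_if_gram:
  assumes "\<forall>r<a * b. \<forall>c<a * b. W $$ (r, c) = (\<Sum>x\<leftarrow>L. x r * cnj (x c))"
    and "\<forall>x\<in>set L. schmidt_rank a b (vec (a * b) x) \<le> k"
  shows "schmidt_number a b W \<le> k"
  unfolding schmidt_number_def
proof (rule Least_le, intro exI conjI allI impI)
  fix i assume "i < length L"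
  then show "(0::real) < 1" "vec (a * b) (L ! i) \<in> carrier_vec (a * b)"
    "schmidt_rank a b (vec (a * b) (L ! i)) \<le> k"
    using assms(2) by simp_all
next
  fix r c assume r: "r < a * b" and c: "c < a * b"
  have "W $$ (r, c) = (\<Sum>i<length L. (L ! i) r * cnj ((L ! i) c))"
    using assms(1) r c unfolding sum_list_map_conv_sum_nth by blast
  then show "W $$ (r, c) = (\<Sum>i<length L. complex_of_real 1 * outer (a * b) (vec (a * b) (L ! i)) $$ (r, c))"
    unfolding outer_def using r c by simp
qed

lemma block_mat_first_two_blocks:
  assumes "r < 2 * d" "c < 2 * d"
  shows "block_mat 2 d (\<lambda>s t. block d X ([0, 1] ! s) ([0, 1] ! t)) $$ (r, c) = X $$ (r, c)"
proof -
  have d: "0 < d" using assms by simp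
  have "[0, 1] ! (i div d) = i div d" if "i < 2 * d" for i :: nat
  proof -
    have "i div d < 2" using that d by (simp add: div_less_iff_less_mult mult.commute)
    then have "i div d = 0 \<or> i div d = 1" by linarith
    then show ?thesis by auto
  qed
  then have "block_mat 2 d (\<lambda>s t. block d X ([0, 1] ! s) ([0, 1] ! t)) $$ (r, c)
      = X $$ (r div d * d + r mod d, c div d * d + c mod d)"
    unfolding block_mat_def block_def using assms d by simp
  then show ?thesis by simp
qed

lemma psd_first_two_blocks:
  assumes "psd (a * b) X" "2 \<le> a"
  shows "psd (2 * b) (block_mat 2 b (\<lambda>s t. block b X ([0, 1] ! s) ([0, 1] ! t)))"
proof (rule psd_fn_imp_psd)
  show "block_mat 2 b (\<lambda>s t. block b X ([0, 1] ! s) ([0, 1] ! t)) \<in> carrier_mat (2 * b) (2 * b)"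
    unfolding block_mat_def by simp
  have "psd_fn (2 * b) (\<lambda>i j. X $$ (i, j))"
    using psd_fn_restrict[OF psd_imp_psd_fn[OF assms(1)]] assms(2) by simp
  then show "psd_fn (2 * b) (\<lambda>i j. block_mat 2 b (\<lambda>s t. block b X ([0, 1] ! s) ([0, 1] ! t)) $$ (i, j))"
    by (rule psd_fn_cong) (intro allI impI, rule block_mat_first_two_blocks[symmetric])
qed

lemma list_all2_in_set_left: "list_all2 P xs ys \<Longrightarrow> x \<in> set xs \<Longrightarrow> \<exists>y\<in>set ys. P x y"
  by (induction rule: list_all2_induct) auto

lemma schmidt_number_le_if_first_two_blocks_separable:
  assumes a: "2 \<le> a" and X: "psd (a * b) X"
    and sep: "separable 2 b (block_mat 2 b (\<lambda>s t. block b X ([0, 1] ! s) ([0, 1] ! t)))"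
  shows "schmidt_number a b X \<le> a - 1"
proof -
  obtain ws where prod: "\<forall>w\<in>set ws. \<exists>p q. w = (\<lambda>r. p (r div b) * q (r mod b))"
    and gram_blocks: "\<forall>r<2 * b. \<forall>c<2 * b.
      block_mat 2 b (\<lambda>s t. block b X ([0, 1] ! s) ([0, 1] ! t)) $$ (r, c) = (\<Sum>w\<leftarrow>ws. w r * cnj (w c))"
    using separable_imp_gram_product_vectors[OF sep] by blast
  have gram: "\<forall>r<2 * b. \<forall>c<2 * b. X $$ (r, c) = (\<Sum>w\<leftarrow>ws. w r * cnj (w c))"
    using gram_blocks block_mat_first_two_blocks by simp
  have "2 * b \<le> a * b" using a by (rule mult_le_mono1)
  then obtain vs us where vs: "list_all2 (\<lambda>v w. \<forall>r<2 * b. v r = w r) vs ws"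
    and us: "\<forall>u\<in>set us. \<forall>r<2 * b. u r = 0"
    and dec: "\<forall>r<a * b. \<forall>c<a * b. X $$ (r, c) = (\<Sum>x\<leftarrow>vs @ us. x r * cnj (x c))"
    using psd_fn_extend_gram_complement[OF psd_imp_psd_fn[OF X]] gram by blast
  have parallel: "\<exists>\<alpha> \<beta> y. \<forall>t<b. x t = \<alpha> * y t \<and> x (b + t) = \<beta> * y t"
    if x: "x \<in> set (vs @ us)" for x
  proof (cases "x \<in> set vs")
    case True
    then obtain w where "w \<in> set ws" "\<forall>r<2 * b. x r = w r"
      using list_all2_in_set_left[OF vs] by blast
    moreover obtain p q where "w = (\<lambda>r. p (r div b) * q (r mod b))" using prod calculation(1) by blast
    ultimately have "\<forall>t<b. x t = p 0 * q t \<and> x (b + t) = p 1 * q t" by simp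
    then show ?thesis by blast
  next
    case False
    then have "\<forall>t<b. x t = 0 \<and> x (b + t) = 0" using x us by simp
    then show ?thesis by (intro exI[of _ 0] exI[of _ 0] exI[of _ "\<lambda>_. 0"]) simp
  qed
  have "\<forall>x\<in>set (vs @ us). schmidt_rank a b (vec (a * b) x) \<le> a - 1"
  proof
    fix x assume "x \<in> set (vs @ us)"
    then obtain \<alpha> \<beta> y where "\<forall>t<b. x t = \<alpha> * y t \<and> x (b + t) = \<beta> * y t" using parallel by blast
    then show "schmidt_rank a b (vec (a * b) x) \<le> a - 1" by (rule schmidt_rank_le_if_first_blocks_parallel[OF a])
  qed
  then show ?thesis by (rule schmidt_number_le_if_gram[OF dec])
qed

theorem corollary19:
  fixes d1 d2 :: nat and X :: "complex mat"
  assumes "2 \<le> d1" and "d1 \<le> d2"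
    and "psd (d1 * d2) X"
    and "schmidt_number d1 d2 X = d1"
  shows "\<exists>k1 < d1. \<exists>k2 < d1. k1 \<noteq> k2 \<and>
    entangled 2 d2 (block_mat 2 d2 (\<lambda>s t. block d2 X ([k1, k2] ! s) ([k1, k2] ! t)))"
proof (intro exI conjI)
  show "(0::nat) < d1" "(1::nat) < d1" "(0::nat) \<noteq> 1" using assms(1) by simp_all
  have "\<not> separable 2 d2 (block_mat 2 d2 (\<lambda>s t. block d2 X ([0, 1] ! s) ([0, 1] ! t)))"
    using schmidt_number_le_if_first_two_blocks_separable[OF assms(1,3)] assms(1,4) by fastforce
  then show "entangled 2 d2 (block_mat 2 d2 (\<lambda>s t. block d2 X ([0, 1] ! s) ([0, 1] ! t)))"
    unfolding entangled_def using psd_first_two_blocks[OF assms(3,1)] by simp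
qed

end
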